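(* Let $R$ be a ring, $\mathcal C$ a Cartier $R$-algebra and $\mathfrak a\subset R$ a $\mathcal C$-ideal. If $(R,\mathcal C)$ is purely $F$-regular along $\mathfrak a$, then $(R,\mathcal C)$ is $F$-pure, $\mathfrak a$ is a radical ideal, and the minimal primes of $\mathfrak a$ are pairwise coprime (i.e. any two distinct minimal primes $\mathfrak p_i,\mathfrak p_j$ satisfy $\mathfrak p_i+\mathfrak p_j=R$).
   Context: All rings are noetherian $F$-finite commutative $\mathbb F_p$-algebras. $F^e_*R$ is $R$ viewed as an $R$-module via the $e$-th Frobenius $r\mapsto r^{p^e}$, and $\mathcal C_{e,R}=\operatorname{Hom}_R(F^e_*R,R)$ ($\mathcal C_{0,R}=R$). The full Cartier algebra $\mathcal C_R=\bigoplus_{e\ge0}\mathcal C_{e,R}$ has product $\phi\cdot\phi'=\phi\circ F^e_*\phi'$ for $\phi\in\mathcal C_{e,R}$, $\phi'\in\mathcal C_{e',R}$. A Cartier $R$-algebra is a graded $R$-subalgebra $\mathcal C=\bigoplus_e\mathcal C_e\subseteq\mathcal C_R$; $\mathcal C_+=\bigoplus_{e>0}\mathcal C_e$. An ideal $\mathfrak b$ is a $\mathcal C$-ideal if $\phi(F^e_*\mathfrak b)\subseteq\mathfrak b$ for all $\phi\in\mathcal C_e$, all $e$. For an ideal $\mathfrak b$, $\mathcal C_+\mathfrak b$ is the ideal generated by all $\phi(F^e_*b)$ with $e>0$, $\phi\in\mathcal C_e$, $b\in\mathfrak b$. $(R,\mathcal C)$ is $F$-pure if $\mathcal C_+R=R$.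 A prime $\mathcal C$-ideal $\mathfrak p$ is a center of $F$-purity if $\mathcal C_+R\not\subseteq\mathfrak p$. $(R,\mathcal C)$ is non-degenerate along a $\mathcal C$-ideal $\mathfrak a$ if every minimal prime of $\mathfrak a$ is a center of $F$-purity, and purely $F$-regular along $\mathfrak a$ if it is non-degenerate along $\mathfrak a$ and every proper $\mathcal C$-ideal is contained in some minimal prime of $\mathfrak a$. *)

theory Defs
  imports "HOL-Computational_Algebra.Primes"
begin

definition is_ideal :: "'a::comm_ring_1 set \<Rightarrow> bool" where
  "is_ideal I \<longleftrightarrow> 0 \<in> I \<and> (\<forall>x\<in>I. \<forall>y\<in>I. x + y \<in> I) \<and> (\<forall>r. \<forall>x\<in>I. r * x \<in> I)"

definition ideal_gen :: "'a::comm_ring_1 set \<Rightarrow> 'a set" where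
  "ideal_gen S = \<Inter> {I. is_ideal I \<and> S \<subseteq> I}"

definition is_prime_ideal :: "'a::comm_ring_1 set \<Rightarrow> bool" where
  "is_prime_ideal P \<longleftrightarrow> is_ideal P \<and> P \<noteq> UNIV \<and> (\<forall>x y. x * y \<in> P \<longrightarrow> x \<in> P \<or> y \<in> P)"

definition minimal_primes :: "'a::comm_ring_1 set \<Rightarrow> 'a set set" where
  "minimal_primes I = {P. is_prime_ideal P \<and> I \<subseteq> P \<and>
      (\<forall>Q. is_prime_ideal Q \<and> I \<subseteq> Q \<and> Q \<subseteq> P \<longrightarrow> Q = P)}"

definition radical :: "'a::comm_ring_1 set \<Rightarrow> 'a set" where
  "radical I = {x. \<exists>n. x ^ n \<in> I}"

definition is_radical_ideal :: "'a::comm_ring_1 set \<Rightarrow> bool" where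
  "is_radical_ideal I \<longleftrightarrow> is_ideal I \<and> radical I = I"

definition ideal_sum :: "'a::comm_ring_1 set \<Rightarrow> 'a set \<Rightarrow> 'a set" where
  "ideal_sum I J = {x + y | x y. x \<in> I \<and> y \<in> J}"

definition noetherian :: "'a::comm_ring_1 itself \<Rightarrow> bool" where
  "noetherian _ \<longleftrightarrow> (\<forall>I::'a set. is_ideal I \<longrightarrow> (\<exists>S. finite S \<and> I = ideal_gen S))"

definition char_p_ring :: "'a::comm_ring_1 itself \<Rightarrow> nat \<Rightarrow> bool" where
  "char_p_ring _ p \<longleftrightarrow> prime p \<and> of_nat p = (0::'a)"

text \<open>F-finite: F_*R is a finitely generated R-module, i.e. there is a finite set S
  such that every x is of the form sum over s in S of r_s^p * s.\<close>
definition F_finite :: "'a::comm_ring_1 itself \<Rightarrow> nat \<Rightarrow> bool" where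
  "F_finite _ p \<longleftrightarrow> (\<exists>S::'a set. finite S \<and> (\<forall>x. \<exists>c. x = (\<Sum>s\<in>S. (c s) ^ p * s)))"

text \<open>An element of Hom_R(F^e_* R, R): an additive map phi with
  phi(r^(p^e) x) = r phi(x).\<close>
definition cartier_maps :: "nat \<Rightarrow> nat \<Rightarrow> ('a::comm_ring_1 \<Rightarrow> 'a) set" where
  "cartier_maps p e = {\<phi>. (\<forall>x y. \<phi> (x + y) = \<phi> x + \<phi> y) \<and>
                          (\<forall>r x. \<phi> (r ^ (p ^ e) * x) = r * \<phi> x)}"

text \<open>A Cartier R-algebra: a graded R-subalgebra of the full Cartier algebra, with
  product phi . psi = phi o F^e_* psi (as functions, composition).  Degree 0 piece is R,
  acting by multiplication.\<close>
definition cartier_algebra :: "nat \<Rightarrow> (nat \<Rightarrow> ('a::comm_ring_1 \<Rightarrow> 'a) set) \<Rightarrow> bool" where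
  "cartier_algebra p C \<longleftrightarrow>
     (\<forall>e. C e \<subseteq> cartier_maps p e) \<and>
     C 0 = {(\<lambda>x. r * x) | r. True} \<and>
     (\<forall>e. (\<lambda>_. 0) \<in> C e) \<and>
     (\<forall>e. \<forall>\<phi>\<in>C e. \<forall>\<psi>\<in>C e. (\<lambda>x. \<phi> x + \<psi> x) \<in> C e) \<and>
     (\<forall>e e'. \<forall>\<phi>\<in>C e. \<forall>\<psi>\<in>C e'. \<phi> \<circ> \<psi> \<in> C (e + e'))"

definition is_C_ideal :: "(nat \<Rightarrow> ('a::comm_ring_1 \<Rightarrow> 'a) set) \<Rightarrow> 'a set \<Rightarrow> bool" where
  "is_C_ideal C b \<longleftrightarrow> is_ideal b \<and> (\<forall>e. \<forall>\<phi>\<in>C e. \<phi> ` b \<subseteq> b)"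

definition C_plus :: "(nat \<Rightarrow> ('a::comm_ring_1 \<Rightarrow> 'a) set) \<Rightarrow> 'a set \<Rightarrow> 'a set" where
  "C_plus C b = ideal_gen {\<phi> x | \<phi> x e. 0 < e \<and> \<phi> \<in> C e \<and> x \<in> b}"

definition F_pure :: "(nat \<Rightarrow> ('a::comm_ring_1 \<Rightarrow> 'a) set) \<Rightarrow> bool" where
  "F_pure C \<longleftrightarrow> C_plus C UNIV = UNIV"

definition center_of_F_purity :: "(nat \<Rightarrow> ('a::comm_ring_1 \<Rightarrow> 'a) set) \<Rightarrow> 'a set \<Rightarrow> bool" where
  "center_of_F_purity C P \<longleftrightarrow> is_prime_ideal P \<and> is_C_ideal C P \<and> \<not> C_plus C UNIV \<subseteq> P"

definition non_degenerate_along :: "(nat \<Rightarrow> ('a::comm_ring_1 \<Rightarrow> 'a) set) \<Rightarrow> 'a set \<Rightarrow> bool" where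
  "non_degenerate_along C a \<longleftrightarrow> (\<forall>P\<in>minimal_primes a. center_of_F_purity C P)"

definition purely_F_regular_along :: "(nat \<Rightarrow> ('a::comm_ring_1 \<Rightarrow> 'a) set) \<Rightarrow> 'a set \<Rightarrow> bool" where
  "purely_F_regular_along C a \<longleftrightarrow> non_degenerate_along C a \<and>
     (\<forall>b. is_C_ideal C b \<and> b \<noteq> UNIV \<longrightarrow> (\<exists>P\<in>minimal_primes a. b \<subseteq> P))"

end

theory Submission
  imports Defs
begin

text \<open>The C-ideal \<open>C\<^sub>+R\<close> is proper exactly when \<open>(R, C)\<close> is not F-pure, and then pure F-regularity
  would put it inside a minimal prime of \<open>\<a>\<close>, contradicting non-degeneracy. F-purity makes
  every C-ideal closed under p-th roots: if \<open>y\<^sup>p \<in> \<b>\<close>, then \<open>\<phi>(x)\<cdot>y = \<phi>(y\<^bsup>p\<^sup>e\<^esup> x) \<in> \<b>\<close> for all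
  \<open>\<phi> \<in> C\<^sub>e\<close>, so \<open>C\<^sub>+R \<cdot> y \<subseteq> \<b>\<close>; hence \<open>\<a>\<close> is radical. Finally the sum of two distinct minimal
  primes is a C-ideal; if it were proper, it would lie in a minimal prime, which by minimality
  would equal both of them.\<close>

lemma is_ideal_ideal_gen: "is_ideal (ideal_gen S)"
  unfolding ideal_gen_def is_ideal_def by auto

lemma ideal_gen_least: "is_ideal I \<Longrightarrow> S \<subseteq> I \<Longrightarrow> ideal_gen S \<subseteq> I"
  unfolding ideal_gen_def by auto

lemma ideal_gen_superset: "S \<subseteq> ideal_gen S"
  unfolding ideal_gen_def by auto

lemma ideal_zero: "is_ideal I \<Longrightarrow> 0 \<in> I"
  unfolding is_ideal_def by auto

lemma ideal_add: "is_ideal I \<Longrightarrow> x \<in> I \<Longrightarrow> y \<in> I \<Longrightarrow> x + y \<in> I"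
  unfolding is_ideal_def by auto

lemma ideal_mult_left: "is_ideal I \<Longrightarrow> x \<in> I \<Longrightarrow> r * x \<in> I"
  unfolding is_ideal_def by auto

lemma ideal_mult_right: "is_ideal I \<Longrightarrow> x \<in> I \<Longrightarrow> x * r \<in> I"
  unfolding is_ideal_def by (metis mult.commute)

lemma ideal_power_mono:
  assumes "is_ideal I" "x ^ m \<in> I" "m \<le> n"
  shows "x ^ n \<in> I"
proof -
  have "x ^ n = x ^ m * x ^ (n - m)"
    using \<open>m \<le> n\<close> by (simp flip: power_add)
  then show ?thesis
    using assms ideal_mult_right by metis
qed

lemma is_ideal_colon: "is_ideal I \<Longrightarrow> is_ideal {z. z * y \<in> I}"
  unfolding is_ideal_def by (auto simp: distrib_right mult.assoc)

lemma is_ideal_ideal_sum: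
  assumes "is_ideal I" "is_ideal J"
  shows "is_ideal (ideal_sum I J)"
  unfolding is_ideal_def ideal_sum_def
proof (intro conjI ballI allI)
  show "0 \<in> {x + y |x y. x \<in> I \<and> y \<in> J}"
    using assms ideal_zero by force
next
  fix u v assume "u \<in> {x + y |x y. x \<in> I \<and> y \<in> J}" "v \<in> {x + y |x y. x \<in> I \<and> y \<in> J}"
  then obtain x y x' y' where "u = x + y" "v = x' + y'" "x \<in> I" "y \<in> J" "x' \<in> I" "y' \<in> J"
    by auto
  moreover have "u + v = (x + x') + (y + y')"
    using \<open>u = x + y\<close> \<open>v = x' + y'\<close> by (simp add: algebra_simps)
  ultimately show "u + v \<in> {x + y |x y. x \<in> I \<and> y \<in> J}"
    using assms ideal_add by blast
next
  fix r u assume "u \<in> {x + y |x y. x \<in> I \<and> y \<in> J}"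
  then obtain x y where "u = x + y" "x \<in> I" "y \<in> J"
    by auto
  moreover have "r * u = r * x + r * y"
    using \<open>u = x + y\<close> by (simp add: distrib_left)
  ultimately show "r * u \<in> {x + y |x y. x \<in> I \<and> y \<in> J}"
    using assms ideal_mult_left by blast
qed

lemma ideal_sum_superset_left: "is_ideal J \<Longrightarrow> I \<subseteq> ideal_sum I J"
  unfolding ideal_sum_def using ideal_zero by force

lemma ideal_sum_superset_right: "is_ideal I \<Longrightarrow> J \<subseteq> ideal_sum I J"
  unfolding ideal_sum_def using ideal_zero by force

lemma cartier_maps_add: "\<phi> \<in> cartier_maps p e \<Longrightarrow> \<phi> (x + y) = \<phi> x + \<phi> y"
  unfolding cartier_maps_def by auto

lemma cartier_maps_zero: "\<phi> \<in> cartier_maps p e \<Longrightarrow> \<phi> 0 = 0"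
  using cartier_maps_add[of \<phi> p e 0 0] by simp

lemma cartier_maps_pow_mult: "\<phi> \<in> cartier_maps p e \<Longrightarrow> \<phi> (r ^ (p ^ e) * x) = r * \<phi> x"
  unfolding cartier_maps_def by auto

lemma cartier_algebra_cartier_maps: "cartier_algebra p C \<Longrightarrow> C e \<subseteq> cartier_maps p e"
  unfolding cartier_algebra_def by auto

lemma cartier_algebra_comp:
  "cartier_algebra p C \<Longrightarrow> \<phi> \<in> C e \<Longrightarrow> \<psi> \<in> C e' \<Longrightarrow> \<phi> \<circ> \<psi> \<in> C (e + e')"
  unfolding cartier_algebra_def by auto

lemma C_plus_UNIV_subset:
  assumes "is_ideal I" "\<And>\<phi> x e. 0 < e \<Longrightarrow> \<phi> \<in> C e \<Longrightarrow> \<phi> x \<in> I"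
  shows "C_plus C UNIV \<subseteq> I"
  unfolding C_plus_def using assms by (intro ideal_gen_least) auto

lemma C_plus_UNIV_mem: "0 < e \<Longrightarrow> \<phi> \<in> C e \<Longrightarrow> \<phi> x \<in> C_plus C UNIV"
  unfolding C_plus_def by (rule subsetD[OF ideal_gen_superset]) blast

lemma is_C_idealI:
  "is_ideal b \<Longrightarrow> (\<And>e \<phi> x. \<phi> \<in> C e \<Longrightarrow> x \<in> b \<Longrightarrow> \<phi> x \<in> b) \<Longrightarrow> is_C_ideal C b"
  unfolding is_C_ideal_def by blast

lemma is_C_idealD: "is_C_ideal C b \<Longrightarrow> \<phi> \<in> C e \<Longrightarrow> x \<in> b \<Longrightarrow> \<phi> x \<in> b"
  unfolding is_C_ideal_def by blast

lemma is_C_ideal_is_ideal: "is_C_ideal C b \<Longrightarrow> is_ideal b"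
  unfolding is_C_ideal_def by blast

text \<open>The elements \<open>y\<close> such that \<open>\<psi>(r y) \<in> I\<close> for all \<open>\<psi> \<in> C\<close> and all \<open>r\<close> form an ideal;
  it contains \<open>I\<close>'s generators whenever \<open>I = C\<^sub>+R\<close>.\<close>

lemma is_ideal_stable_part:
  assumes "cartier_algebra p C" "is_ideal I"
  shows "is_ideal {y. \<forall>e. \<forall>\<psi>\<in>C e. \<forall>r. \<psi> (r * y) \<in> I}"
  unfolding is_ideal_def
proof (intro conjI ballI allI; clarsimp)
  fix e \<psi> assume "\<psi> \<in> C e"
  then show "\<psi> 0 \<in> I"
    using assms cartier_algebra_cartier_maps cartier_maps_zero ideal_zero by (metis subsetD)
next
  fix x y e \<psi> r
  assume "\<forall>e. \<forall>\<psi>\<in>C e. \<forall>r. \<psi> (r * x) \<in> I" "\<forall>e. \<forall>\<psi>\<in>C e. \<forall>r. \<psi> (r * y) \<in> I" "\<psi> \<in> C e"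
  moreover have "\<psi> (r * (x + y)) = \<psi> (r * x) + \<psi> (r * y)"
    using \<open>\<psi> \<in> C e\<close> assms(1) cartier_algebra_cartier_maps cartier_maps_add
    by (metis distrib_left subsetD)
  ultimately show "\<psi> (r * (x + y)) \<in> I"
    using assms(2) ideal_add by metis
next
  fix s x e \<psi> r
  assume "\<forall>e. \<forall>\<psi>\<in>C e. \<forall>r. \<psi> (r * x) \<in> I" "\<psi> \<in> C e"
  then show "\<psi> (r * (s * x)) \<in> I"
    by (metis mult.assoc)
qed

lemma is_C_ideal_C_plus_UNIV:
  assumes C: "cartier_algebra p C"
  shows "is_C_ideal C (C_plus C UNIV)"
proof -
  let ?I = "C_plus C UNIV"
  have I: "is_ideal ?I"
    unfolding C_plus_def by (rule is_ideal_ideal_gen)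
  have "?I \<subseteq> {y. \<forall>e. \<forall>\<psi>\<in>C e. \<forall>r. \<psi> (r * y) \<in> ?I}"
  proof (rule C_plus_UNIV_subset[OF is_ideal_stable_part[OF C I]], clarify)
    fix \<phi> x e e' \<psi> r assume "0 < e" "\<phi> \<in> C e" "\<psi> \<in> C e'"
    have "\<psi> (r * \<phi> x) = (\<psi> \<circ> \<phi>) (r ^ (p ^ e) * x)"
      using \<open>\<phi> \<in> C e\<close> C cartier_algebra_cartier_maps cartier_maps_pow_mult
      by (metis comp_apply subsetD)
    also have "\<dots> \<in> ?I"
      using \<open>0 < e\<close> cartier_algebra_comp[OF C \<open>\<psi> \<in> C e'\<close> \<open>\<phi> \<in> C e\<close>]
      by (intro C_plus_UNIV_mem[of "e' + e" "\<psi> \<circ> \<phi>"]) auto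
    finally show "\<psi> (r * \<phi> x) \<in> ?I" .
  qed
  then have "\<psi> y \<in> ?I" if "\<psi> \<in> C e" "y \<in> ?I" for e \<psi> y
    using that by (metis (no_types, lifting) mem_Collect_eq mult_1 subsetD)
  then show ?thesis
    using I by (intro is_C_idealI)
qed

lemma is_C_ideal_ideal_sum:
  assumes "cartier_algebra p C" "is_C_ideal C I" "is_C_ideal C J"
  shows "is_C_ideal C (ideal_sum I J)"
proof (rule is_C_idealI)
  show "is_ideal (ideal_sum I J)"
    using assms is_C_ideal_is_ideal is_ideal_ideal_sum by blast
next
  fix e \<phi> z assume "\<phi> \<in> C e" "z \<in> ideal_sum I J"
  then obtain x y where "z = x + y" "x \<in> I" "y \<in> J"
    unfolding ideal_sum_def by auto
  moreover have "\<phi> (x + y) = \<phi> x + \<phi> y"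
    using \<open>\<phi> \<in> C e\<close> assms(1) cartier_algebra_cartier_maps cartier_maps_add by blast
  ultimately show "\<phi> z \<in> ideal_sum I J"
    using assms(2,3) \<open>\<phi> \<in> C e\<close> is_C_idealD unfolding ideal_sum_def by blast
qed

lemma F_pure_C_ideal_pth_root:
  assumes C: "cartier_algebra p C" and "prime p" "F_pure C" and b: "is_C_ideal C b"
    and "y ^ p \<in> b"
  shows "y \<in> b"
proof -
  have "C_plus C UNIV \<subseteq> {z. z * y \<in> b}"
  proof (rule C_plus_UNIV_subset[OF is_ideal_colon[OF is_C_ideal_is_ideal[OF b]]], clarify)
    fix \<phi> x e assume "0 < e" "\<phi> \<in> C e"
    have "p ^ 1 \<le> p ^ e"
      using \<open>0 < e\<close> \<open>prime p\<close> by (intro power_increasing) (auto simp: Suc_leI prime_gt_0_nat)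
    then have "y ^ (p ^ e) * x \<in> b"
      using assms(5) b is_C_ideal_is_ideal ideal_power_mono ideal_mult_right by fastforce
    moreover have "\<phi> x * y = \<phi> (y ^ (p ^ e) * x)"
      using \<open>\<phi> \<in> C e\<close> C cartier_algebra_cartier_maps cartier_maps_pow_mult
      by (metis mult.commute subsetD)
    ultimately show "\<phi> x * y \<in> b"
      using b \<open>\<phi> \<in> C e\<close> is_C_idealD by metis
  qed
  then show ?thesis
    using \<open>F_pure C\<close> unfolding F_pure_def by (metis UNIV_I mem_Collect_eq mult_1 subsetD)
qed

lemma F_pure_C_ideal_radical:
  assumes C: "cartier_algebra p C" and p: "prime p" and "F_pure C" and b: "is_C_ideal C b"
  shows "is_radical_ideal b"
proof -
  have pth_powers: "x ^ (p ^ k) \<in> b \<Longrightarrow> x \<in> b" for x k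
  proof (induction k)
    case (Suc k)
    have "(x ^ (p ^ k)) ^ p \<in> b"
      using Suc.prems by (metis power_Suc power_mult mult.commute)
    then show ?case
      using F_pure_C_ideal_pth_root[OF C p \<open>F_pure C\<close> b] Suc.IH by blast
  qed simp
  have "x \<in> b" if "x ^ n \<in> b" for x n
  proof -
    have "n < 2 ^ n"
      by (rule less_exp)
    also have "\<dots> \<le> p ^ n"
      using p prime_ge_2_nat by (intro power_mono) auto
    finally show ?thesis
      using that b is_C_ideal_is_ideal ideal_power_mono pth_powers by (metis less_imp_le)
  qed
  then show ?thesis
    unfolding is_radical_ideal_def radical_def
    using b is_C_ideal_is_ideal by (auto intro: exI[of _ 1])
qed

lemma purely_F_regular_along_F_pure:
  assumes "cartier_algebra p C" "purely_F_regular_along C a"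
  shows "F_pure C"
proof (rule ccontr)
  assume "\<not> F_pure C"
  then obtain P where "P \<in> minimal_primes a" "C_plus C UNIV \<subseteq> P"
    using assms is_C_ideal_C_plus_UNIV unfolding purely_F_regular_along_def F_pure_def by blast
  then show False
    using assms(2) unfolding purely_F_regular_along_def non_degenerate_along_def
      center_of_F_purity_def by blast
qed

lemma purely_F_regular_along_minimal_primes_coprime:
  assumes C: "cartier_algebra p C" and reg: "purely_F_regular_along C a"
    and P: "P \<in> minimal_primes a" and Q: "Q \<in> minimal_primes a" and "P \<noteq> Q"
  shows "ideal_sum P Q = UNIV"
proof (rule ccontr)
  assume "ideal_sum P Q \<noteq> UNIV"
  have "is_C_ideal C P" "is_C_ideal C Q"
    using reg P Q unfolding purely_F_regular_along_def non_degenerate_along_def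
      center_of_F_purity_def by auto
  then obtain M where M: "M \<in> minimal_primes a" "ideal_sum P Q \<subseteq> M"
    using reg \<open>ideal_sum P Q \<noteq> UNIV\<close> is_C_ideal_ideal_sum[OF C]
    unfolding purely_F_regular_along_def by blast
  have "P \<subseteq> M" "Q \<subseteq> M"
    using M(2) \<open>is_C_ideal C P\<close> \<open>is_C_ideal C Q\<close> is_C_ideal_is_ideal
      ideal_sum_superset_left ideal_sum_superset_right by blast+
  then have "P = M" "Q = M"
    using M(1) P Q unfolding minimal_primes_def by auto
  with \<open>P \<noteq> Q\<close> show False
    by simp
qed

theorem proposition2p8:
  fixes p :: nat
    and C :: "nat \<Rightarrow> ('a::comm_ring_1 \<Rightarrow> 'a) set"
    and a :: "'a set"
  assumes "char_p_ring TYPE('a) p"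
    and "noetherian TYPE('a)"
    and "F_finite TYPE('a) p"
    and "cartier_algebra p C"
    and "is_C_ideal C a"
    and "purely_F_regular_along C a"
  shows "F_pure C \<and> is_radical_ideal a \<and>
         (\<forall>P\<in>minimal_primes a. \<forall>Q\<in>minimal_primes a. P \<noteq> Q \<longrightarrow> ideal_sum P Q = UNIV)"
proof -
  have "prime p"
    using assms(1) unfolding char_p_ring_def by simp
  have "F_pure C"
    using purely_F_regular_along_F_pure[OF assms(4,6)] .
  moreover have "is_radical_ideal a"
    using F_pure_C_ideal_radical[OF assms(4) \<open>prime p\<close> \<open>F_pure C\<close> assms(5)] .
  moreover have "\<forall>P\<in>minimal_primes a. \<forall>Q\<in>minimal_primes a. P \<noteq> Q \<longrightarrow> ideal_sum P Q = UNIV"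
    using purely_F_regular_along_minimal_primes_coprime[OF assms(4,6)] by blast
  ultimately show ?thesis
    by blast
qed

end
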